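(* Let $X$ be a real Hilbert space and $Y$ a closed subspace of $X$. Let $S\colon X\to Y$ be a bounded linear operator such that the restriction $S|_Y\colon Y\to Y$ is surjective and injective, and such that $\langle x, Sx\rangle+\tfrac12\|Sx\|^2=0$ for all $x\in X$. Let $f\in\Gamma_0(X)$ with $f^*|_Y\in\Gamma_0(Y)$. Then the multifunction $[\partial(f^*|_Y)]\circ S|_Y\colon Y\rightrightarrows Y$ has a unique fixed point $e$ (i.e. a unique $e\in Y$ with $e\in\partial(f^*|_Y)(Se)$), and $$x\in X \text{ and } Sx\in\partial f(x)\ \Longrightarrow\ Sx=Se.$$ Furthermore: (a) If $x\in X$, $f(x)\in\mathbb{R}$ and $f(x)\le (f^*|_Y)^*(e)$, then $$Sx\in\partial f(x)\iff f^*(Sx)+\tfrac12\|Sx\|^2+f(x)=0\iff Sx=Se.$$ (b) If $x\in X$ and $f(x)=\min_X f$, then the equivalences in (a) hold, i.e. $Sx\in\partial f(x)\iff f^*(Sx)+\tfrac12\|Sx\|^2+f(x)=0\iff Sx=Se$.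
   Context: For a real Hilbert space $H$, $\Gamma_0(H)$ is the set of proper, convex, lower semicontinuous functions $H\to\,]-\infty,\infty]$. $f^*$ denotes the Fenchel conjugate of $f$ on $X$, $f^*(u)=\sup_{x\in X}(\langle x,u\rangle-f(x))$; $f^*|_Y$ is its restriction to $Y$, regarded as a function on the Hilbert space $Y$; $(f^*|_Y)^*$ is the Fenchel conjugate of $f^*|_Y$ computed in $Y$, and $\partial(f^*|_Y)$ is its subdifferential in $Y$. $\partial f$ is the subdifferential of $f$ on $X$. Since $Y\subseteq X$, $Sx\in Y$ is also regarded as an element of $X$. *)

theory Defs
  imports "HOL-Analysis.Analysis"
begin

text \<open>Extended-real-valued functions on a real Hilbert space, considered on a set Y
(Y = UNIV for the whole space X).\<close>

definition epi_on :: "'a set \<Rightarrow> ('a \<Rightarrow> ereal) \<Rightarrow> ('a \<times> real) set" where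
  "epi_on Y g = {(x, r). x \<in> Y \<and> g x \<le> ereal r}"

text \<open>Gamma0(Y): proper (never -infinity, somewhere finite), convex (convex epigraph),
lower semicontinuous (closed epigraph; Y is closed, so this is lsc on Y).\<close>
definition Gamma0_on :: "'a::real_normed_vector set \<Rightarrow> ('a \<Rightarrow> ereal) \<Rightarrow> bool" where
  "Gamma0_on Y g \<longleftrightarrow>
     (\<forall>x\<in>Y. g x \<noteq> -\<infinity>) \<and> (\<exists>x\<in>Y. g x \<noteq> \<infinity>) \<and>
     convex (epi_on Y g) \<and> closed (epi_on Y g)"

definition conj_on :: "'a::real_inner set \<Rightarrow> ('a \<Rightarrow> ereal) \<Rightarrow> 'a \<Rightarrow> ereal" where
  "conj_on Y g u = (SUP x\<in>Y. ereal (inner x u) - g x)"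

definition subdiff_on :: "'a::real_inner set \<Rightarrow> ('a \<Rightarrow> ereal) \<Rightarrow> 'a \<Rightarrow> 'a set" where
  "subdiff_on Y g x = {u \<in> Y. x \<in> Y \<and> g x \<noteq> \<infinity> \<and> g x \<noteq> -\<infinity> \<and>
     (\<forall>y\<in>Y. g x + ereal (inner (y - x) u) \<le> g y)}"

end

(* Let T be the inverse of S on Y. The identity \<langle>x, Sx\<rangle> = -\<parallel>Sx\<parallel>\<^sup>2/2 gives
   \<langle>Tu, u\<rangle> = -\<parallel>u\<parallel>\<^sup>2/2 on Y and, by polarisation, \<langle>Tz, y\<rangle> = \<langle>z, -y - Ty\<rangle>: T has an
   everywhere defined adjoint, so it is bounded (Hellinger-Toeplitz, via the Baire category theorem).
   With g = f*|Y, the fixed points are the points e = Tu with u \<in> Y and Tu \<in> \<partial>g(u), and -T is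
   strongly monotone and Lipschitz on Y. Hence for a small step s the forward-backward map
   u \<mapsto> prox_sg(u + sTu) is a contraction of Y, and Banach's fixed point theorem provides u.
   Proximal points exist because g plus a quadratic is strongly convex and lower semicontinuous,
   so its minimising sequences converge.
   If Sx \<in> \<partial>f(x), or if e' is another fixed point, monotonicity of subdifferentials gives
   \<langle>x - e, Sx - Se\<rangle> \<ge> 0 (resp. \<langle>e' - e, Se' - Se\<rangle> \<ge> 0), while the identity makes this
   quantity -\<parallel>Sx - Se\<parallel>\<^sup>2/2; hence Sx = Se and e' = e. The equivalences in (a) are the
   Fenchel-Young equality, and a minimiser x of f satisfies f(x) = -f*(0) \<le> (f*|Y)*(e),
   which reduces (b) to (a). *)

theory Submission
  imports Defs
begin

lemma adjoint_on_imp_linear: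
  fixes M M' :: "'a::real_inner \<Rightarrow> 'a"
  assumes "subspace Y" and MY: "\<And>u. u \<in> Y \<Longrightarrow> M u \<in> Y"
    and adj: "\<And>z y. z \<in> Y \<Longrightarrow> y \<in> Y \<Longrightarrow> inner (M z) y = inner z (M' y)"
    and "a \<in> Y" "b \<in> Y"
  shows "M (a + c *\<^sub>R b) = M a + c *\<^sub>R M b"
proof -
  define d where "d = M (a + c *\<^sub>R b) - (M a + c *\<^sub>R M b)"
  have "d \<in> Y"
    using assms by (simp add: d_def MY subspace_add subspace_diff subspace_scale)
  then have "inner d d = 0"
    using assms by (simp add: d_def adj subspace_add subspace_scale inner_diff_left inner_add_left)
  then show ?thesis by (simp add: d_def)
qed

lemma closed_norm_sublevel_if_adjoint_on:
  fixes M M' :: "'a::real_inner \<Rightarrow> 'a"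
  assumes "closed Y" and MY: "\<And>u. u \<in> Y \<Longrightarrow> M u \<in> Y"
    and adj: "\<And>z y. z \<in> Y \<Longrightarrow> y \<in> Y \<Longrightarrow> inner (M z) y = inner z (M' y)"
  shows "closed {u \<in> Y. norm (M u) \<le> r}"
  unfolding closed_sequential_limits
proof (intro allI impI, elim conjE)
  fix x l assume x: "\<forall>k. x k \<in> {u \<in> Y. norm (M u) \<le> r}" and lim: "x \<longlonglongrightarrow> l"
  have "l \<in> Y" using \<open>closed Y\<close> lim x closed_sequentially by blast
  define v where "v = M l"
  have "v \<in> Y" using MY \<open>l \<in> Y\<close> by (simp add: v_def)
  have "(\<lambda>k. inner (M (x k)) v) \<longlonglongrightarrow> inner v v"
  proof -
    have "(\<lambda>k. inner (x k) (M' v)) \<longlonglongrightarrow> inner l (M' v)"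
      by (intro tendsto_intros lim)
    moreover have "inner (M (x k)) v = inner (x k) (M' v)" for k
      using x \<open>v \<in> Y\<close> adj by blast
    moreover have "inner l (M' v) = inner v v"
      using \<open>v \<in> Y\<close> \<open>l \<in> Y\<close> adj by (simp add: v_def)
    ultimately show ?thesis by simp
  qed
  moreover have "inner (M (x k)) v \<le> r * norm v" for k
  proof -
    have "inner (M (x k)) v \<le> norm (M (x k)) * norm v" by (rule norm_cauchy_schwarz)
    also have "\<dots> \<le> r * norm v" using x by (simp add: mult_right_mono)
    finally show ?thesis .
  qed
  ultimately have "(norm v)\<^sup>2 \<le> r * norm v"
    by (simp add: power2_norm_eq_inner LIMSEQ_le_const2)
  moreover have "0 \<le> r" using x norm_ge_zero order_trans by blast
  ultimately have "norm v \<le> r"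
    by (cases "norm v = 0") (auto simp: power2_eq_square mult_le_cancel_right)
  then show "l \<in> {u \<in> Y. norm (M u) \<le> r}" using \<open>l \<in> Y\<close> by (simp add: v_def)
qed

lemma closed_cover_has_interior:
  fixes Y :: "'a::{real_normed_vector,complete_space} set"
  assumes "closed Y" "Y \<noteq> {}" and "\<And>n::nat. closed (F n)" and "Y \<subseteq> (\<Union>n. F n)"
  shows "\<exists>n u \<epsilon>. u \<in> Y \<and> 0 < \<epsilon> \<and> ball u \<epsilon> \<inter> Y \<subseteq> F n"
proof -
  have "(\<Union>n. Y \<inter> F n) = topspace (top_of_set Y)"
    using assms(4) by auto
  then have "(top_of_set Y) interior_of (\<Union>n. Y \<inter> F n) \<noteq> {}"
    using \<open>Y \<noteq> {}\<close> interior_of_topspace[of "top_of_set Y"] by simp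
  moreover have "completely_metrizable_space (top_of_set Y)"
    using completely_metrizable_space_closedin completely_metrizable_space_euclidean
      closed_closedin \<open>closed Y\<close> by blast
  moreover have "closedin (top_of_set Y) (Y \<inter> F n)" for n
    using assms(3) by (simp add: closedin_closed_Int)
  ultimately obtain n where "(top_of_set Y) interior_of (Y \<inter> F n) \<noteq> {}"
    using Baire_category_alt[of "top_of_set Y" "range (\<lambda>n. Y \<inter> F n)"] by auto
  then obtain U u where "openin (top_of_set Y) U" "u \<in> U" "U \<subseteq> Y \<inter> F n"
    unfolding interior_of_def by blast
  then obtain \<epsilon> where "0 < \<epsilon>" "ball u \<epsilon> \<inter> Y \<subseteq> U"
    using openin_contains_ball by metis
  then show ?thesis using \<open>u \<in> U\<close> \<open>U \<subseteq> Y \<inter> F n\<close> by blast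
qed

lemma norm_bound_if_bounded_on_ball:
  fixes M :: "'a::real_normed_vector \<Rightarrow> 'b::real_normed_vector"
  assumes "subspace Y"
    and lin: "\<And>a b c. a \<in> Y \<Longrightarrow> b \<in> Y \<Longrightarrow> M (a + c *\<^sub>R b) = M a + c *\<^sub>R M b"
    and "u0 \<in> Y" "0 < \<epsilon>" and bnd: "\<And>u. u \<in> ball u0 \<epsilon> \<inter> Y \<Longrightarrow> norm (M u) \<le> r"
    and "y \<in> Y"
  shows "norm (M y) \<le> 4 * r / \<epsilon> * norm y"
proof (cases "y = 0")
  case True
  then have "M y = 0" using lin[of 0 0 "-1"] \<open>subspace Y\<close> by (simp add: subspace_0)
  then show ?thesis using True by simp
next
  case False
  define t where "t = \<epsilon> / (2 * norm y)"
  have "0 < t" using False \<open>0 < \<epsilon>\<close> by (simp add: t_def)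
  have "u0 + t *\<^sub>R y \<in> ball u0 \<epsilon> \<inter> Y"
    using False \<open>0 < \<epsilon>\<close> \<open>0 < t\<close> assms by (simp add: t_def dist_norm subspace_add subspace_scale)
  then have "norm (M u0 + t *\<^sub>R M y) \<le> r"
    using bnd lin[OF \<open>u0 \<in> Y\<close> \<open>y \<in> Y\<close>] by metis
  moreover have "norm (M u0) \<le> r" using bnd \<open>u0 \<in> Y\<close> \<open>0 < \<epsilon>\<close> by simp
  ultimately have "t * norm (M y) \<le> 2 * r"
    using norm_triangle_ineq4[of "M u0 + t *\<^sub>R M y" "M u0"] \<open>0 < t\<close> by simp
  then have "norm (M y) \<le> 2 * r / t" using \<open>0 < t\<close> by (simp add: field_simps)
  also have "\<dots> = 4 * r / \<epsilon> * norm y" using False \<open>0 < \<epsilon>\<close> by (simp add: t_def field_simps)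
  finally show ?thesis .
qed

lemma bounded_if_adjoint_on:
  fixes M M' :: "'a::{real_inner,complete_space} \<Rightarrow> 'a"
  assumes "subspace Y" "closed Y" and MY: "\<And>u. u \<in> Y \<Longrightarrow> M u \<in> Y"
    and adj: "\<And>z y. z \<in> Y \<Longrightarrow> y \<in> Y \<Longrightarrow> inner (M z) y = inner z (M' y)"
  shows "\<exists>C>0. \<forall>u\<in>Y. norm (M u) \<le> C * norm u"
proof -
  define F where "F n = {u \<in> Y. norm (M u) \<le> real n}" for n :: nat
  have "Y \<subseteq> (\<Union>n. F n)"
    using real_arch_simple by (fastforce simp: F_def)
  moreover have "closed (F n)" for n
    unfolding F_def using closed_norm_sublevel_if_adjoint_on assms by blast
  moreover have "Y \<noteq> {}" using \<open>subspace Y\<close> subspace_0 by blast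
  ultimately obtain n u \<epsilon> where "u \<in> Y" "0 < \<epsilon>" "ball u \<epsilon> \<inter> Y \<subseteq> F n"
    using closed_cover_has_interior \<open>closed Y\<close> by metis
  then have "norm (M u') \<le> real n" if "u' \<in> ball u \<epsilon> \<inter> Y" for u'
    using that by (auto simp: F_def)
  then have "norm (M y) \<le> 4 * real n / \<epsilon> * norm y" if "y \<in> Y" for y
    using norm_bound_if_bounded_on_ball[OF \<open>subspace Y\<close> adjoint_on_imp_linear[OF \<open>subspace Y\<close> MY adj]]
      \<open>u \<in> Y\<close> \<open>0 < \<epsilon>\<close> that by blast
  then have "norm (M y) \<le> (4 * real n / \<epsilon> + 1) * norm y" if "y \<in> Y" for y
    using that by (simp add: distrib_right add_increasing2)
  moreover have "0 < 4 * real n / \<epsilon> + 1" using \<open>0 < \<epsilon>\<close> by (simp add: add_nonneg_pos)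
  ultimately show ?thesis by blast
qed

lemma conj_on_ge:
  assumes "x \<in> Z"
  shows "ereal (inner x u) - h x \<le> conj_on Z h u"
  unfolding conj_on_def using assms by (rule SUP_upper2) simp

lemma subdiff_onD:
  assumes "u \<in> subdiff_on Z h x"
  obtains r where "x \<in> Z" "u \<in> Z" "h x = ereal r" "\<And>y. y \<in> Z \<Longrightarrow> ereal (r + inner (y - x) u) \<le> h y"
  using assms unfolding subdiff_on_def by (cases "h x") auto

lemma subdiff_on_iff_conj_on:
  assumes "x \<in> Z" "u \<in> Z" "h x = ereal r"
  shows "u \<in> subdiff_on Z h x \<longleftrightarrow> conj_on Z h u = ereal (inner x u - r)"
proof -
  have "u \<in> subdiff_on Z h x \<longleftrightarrow> (\<forall>y\<in>Z. ereal (inner y u) - h y \<le> ereal (inner x u - r))"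
  proof -
    have "ereal (r + inner (y - x) u) \<le> h y \<longleftrightarrow> ereal (inner y u) - h y \<le> ereal (inner x u - r)" for y
      by (cases "h y") (simp_all add: inner_diff_left, linarith)
    then show ?thesis using assms by (auto simp: subdiff_on_def)
  qed
  also have "\<dots> \<longleftrightarrow> conj_on Z h u \<le> ereal (inner x u - r)"
    unfolding conj_on_def by (rule SUP_le_iff[symmetric])
  also have "\<dots> \<longleftrightarrow> conj_on Z h u = ereal (inner x u - r)"
    using conj_on_ge[OF \<open>x \<in> Z\<close>, of u h] assms by auto
  finally show ?thesis .
qed

lemma subdiff_on_monotone:
  assumes "a \<in> subdiff_on Z h p" "b \<in> subdiff_on Z h q"
  shows "0 \<le> inner (p - q) (a - b)"
proof -
  obtain r where "p \<in> Z" "a \<in> Z" "h p = ereal r" and ra: "\<And>y. y \<in> Z \<Longrightarrow> ereal (r + inner (y - p) a) \<le> h y"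
    using subdiff_onD[OF assms(1)] by blast
  obtain s where "q \<in> Z" "b \<in> Z" "h q = ereal s" and sb: "\<And>y. y \<in> Z \<Longrightarrow> ereal (s + inner (y - q) b) \<le> h y"
    using subdiff_onD[OF assms(2)] by blast
  have "r + inner (q - p) a \<le> s" "s + inner (p - q) b \<le> r"
    using ra[OF \<open>q \<in> Z\<close>] sb[OF \<open>p \<in> Z\<close>] \<open>h p = ereal r\<close> \<open>h q = ereal s\<close> by simp_all
  then show ?thesis by (simp add: inner_diff_left inner_diff_right)
qed

lemma inner_subdiff_conj_on_nonneg:
  assumes "w \<in> subdiff_on UNIV f x" "w \<in> Y" "e \<in> subdiff_on Y (conj_on UNIV f) v"
  shows "0 \<le> inner (x - e) (w - v)"
proof -
  obtain r where r: "f x = ereal r" using subdiff_onD[OF assms(1)] by blast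
  have "conj_on UNIV f w = ereal (inner x w - r)"
    using assms(1) subdiff_on_iff_conj_on[of x UNIV w f r] r by simp
  moreover obtain \<gamma> where "conj_on UNIV f v = ereal \<gamma>"
    and "ereal (\<gamma> + inner (w - v) e) \<le> conj_on UNIV f w"
    using subdiff_onD[OF assms(3)] \<open>w \<in> Y\<close> by blast
  moreover have "ereal (inner x v) - f x \<le> conj_on UNIV f v" by (rule conj_on_ge) simp
  ultimately have "\<gamma> + inner (w - v) e \<le> inner x w - r" "inner x v - r \<le> \<gamma>"
    using r by simp_all
  then show ?thesis by (simp add: inner_diff_left inner_diff_right inner_commute)
qed

lemma conj_on_zero_minimizer:
  assumes "\<forall>y. f x \<le> f y"
  shows "conj_on UNIV f 0 = - f x"
proof (rule antisym)
  show "conj_on UNIV f 0 \<le> - f x"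
    unfolding conj_on_def
  proof (rule SUP_least)
    fix y show "ereal (inner y 0) - f y \<le> - f x"
      using assms[rule_format, of y] by (cases "f x"; cases "f y") auto
  qed
  show "- f x \<le> conj_on UNIV f 0"
    using conj_on_ge[of x UNIV 0 f] by (cases "f x") auto
qed

lemma minimizer_le_biconj:
  assumes "0 \<in> Y" "\<forall>y. f x \<le> f y"
  shows "f x \<le> conj_on Y (conj_on UNIV f) e"
proof -
  have "ereal (inner 0 e) - conj_on UNIV f 0 \<le> conj_on Y (conj_on UNIV f) e"
    using conj_on_ge[OF assms(1)] .
  moreover have "ereal (inner 0 e) - conj_on UNIV f 0 = f x"
    using conj_on_zero_minimizer[OF assms(2)] by (cases "f x") auto
  ultimately show ?thesis by simp
qed

lemma Gamma0_on_finite: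
  assumes "Gamma0_on Y g" "p \<in> Y" "g p \<noteq> \<infinity>"
  shows "g p = ereal (real_of_ereal (g p))"
  using assms unfolding Gamma0_on_def by (cases "g p") auto

lemma Gamma0_on_convex:
  fixes g :: "'a::real_normed_vector \<Rightarrow> ereal"
  assumes G: "Gamma0_on Y g" and "subspace Y" "p \<in> Y" "q \<in> Y" "g p \<noteq> \<infinity>" "g q \<noteq> \<infinity>"
    and "0 \<le> t" "t \<le> 1"
  defines "u \<equiv> (1 - t) *\<^sub>R p + t *\<^sub>R q"
  shows "u \<in> Y" "g u \<noteq> \<infinity>"
    "real_of_ereal (g u) \<le> (1 - t) * real_of_ereal (g p) + t * real_of_ereal (g q)"
proof -
  have "(p, real_of_ereal (g p)) \<in> epi_on Y g" "(q, real_of_ereal (g q)) \<in> epi_on Y g"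
    using Gamma0_on_finite[OF G] assms by (auto simp: epi_on_def)
  then have "(1 - t) *\<^sub>R (p, real_of_ereal (g p)) + t *\<^sub>R (q, real_of_ereal (g q)) \<in> epi_on Y g"
    using G assms by (intro convexD) (auto simp: Gamma0_on_def)
  then have "u \<in> Y" and le: "g u \<le> ereal ((1 - t) * real_of_ereal (g p) + t * real_of_ereal (g q))"
    by (auto simp: epi_on_def u_def)
  moreover have "g u \<noteq> -\<infinity>" using G \<open>u \<in> Y\<close> by (simp add: Gamma0_on_def)
  ultimately obtain r where r: "g u = ereal r" by (cases "g u") auto
  show "u \<in> Y" by fact
  show "g u \<noteq> \<infinity>" using r by simp
  show "real_of_ereal (g u) \<le> (1 - t) * real_of_ereal (g p) + t * real_of_ereal (g q)"
    using r le by simp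
qed

lemma Gamma0_on_lsc:
  assumes "Gamma0_on Y g" "\<And>n. P n \<in> Y" "\<And>n. g (P n) \<le> ereal (r n)" "P \<longlonglongrightarrow> p" "r \<longlonglongrightarrow> s"
  shows "p \<in> Y" "g p \<le> ereal s"
proof -
  have "closed (epi_on Y g)" using assms(1) by (simp add: Gamma0_on_def)
  moreover have "(P n, r n) \<in> epi_on Y g" for n using assms(2,3) by (simp add: epi_on_def)
  moreover have "(\<lambda>n. (P n, r n)) \<longlonglongrightarrow> (p, s)" using assms(4,5) by (rule tendsto_Pair)
  ultimately have "(p, s) \<in> epi_on Y g" by (rule closed_sequentially)
  then show "p \<in> Y" "g p \<le> ereal s" by (simp_all add: epi_on_def)
qed

lemma norm_add_sq:
  fixes x y :: "'a::real_inner"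
  shows "(norm (x + y))\<^sup>2 = (norm x)\<^sup>2 + 2 * inner x y + (norm y)\<^sup>2"
  using dot_norm[of x y] by simp

lemma affine_quadratic_lower_bound:
  fixes a p z :: "'a::real_inner"
  assumes "0 < c"
  shows "inner a z - (norm a)\<^sup>2 / (2 * c) \<le> inner a p + c / 2 * (norm (p - z))\<^sup>2"
proof -
  define r where "r = norm (p - z)"
  have "- (norm a * r) \<le> inner a (p - z)"
    using norm_cauchy_schwarz[of "-a" "p - z"] by (simp add: r_def)
  moreover have "0 \<le> c / 2 * (r - norm a / c)\<^sup>2" using assms by simp
  moreover have "c / 2 * (r - norm a / c)\<^sup>2 = c / 2 * r\<^sup>2 - norm a * r + (norm a)\<^sup>2 / (2 * c)"
    using assms by (simp add: field_simps power2_eq_square)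
  ultimately show ?thesis by (simp add: r_def inner_diff_right)
qed

lemma Cauchy_if_minimizing_uniformly_convex:
  fixes P :: "nat \<Rightarrow> 'a::real_normed_vector"
  assumes "0 < \<kappa>"
    and mid: "\<And>p q. p \<in> D \<Longrightarrow> q \<in> D \<Longrightarrow> \<kappa> * (norm (p - q))\<^sup>2 \<le> (Q p + Q q) / 2 - m"
    and P: "\<And>n. P n \<in> D" "\<And>n. Q (P n) < m + inverse (real (Suc n))"
  shows "Cauchy P"
proof (rule CauchyI)
  fix e :: real assume "0 < e"
  then obtain N where N: "inverse (real (Suc N)) < \<kappa> * e\<^sup>2"
    using reals_Archimedean[of "\<kappa> * e\<^sup>2"] \<open>0 < \<kappa>\<close> by auto
  have "norm (P k - P n) < e" if "N \<le> k" "N \<le> n" for k n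
  proof -
    have "inverse (real (Suc k)) \<le> inverse (real (Suc N))" "inverse (real (Suc n)) \<le> inverse (real (Suc N))"
      using that by (simp_all add: le_imp_inverse_le)
    then have "Q (P k) - m < inverse (real (Suc N))" "Q (P n) - m < inverse (real (Suc N))"
      using P(2)[of k] P(2)[of n] by linarith+
    then have "\<kappa> * (norm (P k - P n))\<^sup>2 < \<kappa> * e\<^sup>2"
      using mid[OF P(1) P(1), of k n] N by argo
    then have "(norm (P k - P n))\<^sup>2 < e\<^sup>2" using \<open>0 < \<kappa>\<close> by simp
    then show ?thesis using \<open>0 < e\<close> by (simp add: power_less_imp_less_base)
  qed
  then show "\<exists>M. \<forall>k\<ge>M. \<forall>n\<ge>M. norm (P k - P n) < e" by blast
qed

lemma Gamma0_on_quadratic_midpoint: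
  fixes g :: "'a::real_inner \<Rightarrow> ereal"
  assumes G: "Gamma0_on Y g" and "subspace Y" "p \<in> Y" "q \<in> Y" "g p \<noteq> \<infinity>" "g q \<noteq> \<infinity>"
  defines "u \<equiv> (1/2) *\<^sub>R p + (1/2) *\<^sub>R q"
  shows "u \<in> Y" "g u \<noteq> \<infinity>"
    "real_of_ereal (g u) + c / 2 * (norm (u - z))\<^sup>2 + c / 8 * (norm (p - q))\<^sup>2
      \<le> (real_of_ereal (g p) + c / 2 * (norm (p - z))\<^sup>2 + (real_of_ereal (g q) + c / 2 * (norm (q - z))\<^sup>2)) / 2"
proof -
  show "u \<in> Y" "g u \<noteq> \<infinity>" using Gamma0_on_convex[OF assms(1-6), of "1/2"] by (simp_all add: u_def)
  have "u - z = (1/2) *\<^sub>R (p - z) + (1/2) *\<^sub>R (q - z)"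
    by (simp add: u_def algebra_simps) (simp flip: scaleR_add_left)
  then have iden: "(norm (u - z))\<^sup>2 = (norm (p - z))\<^sup>2 / 2 + (norm (q - z))\<^sup>2 / 2 - (norm (p - q))\<^sup>2 / 4"
    using dot_norm_neg[of "p - z" "q - z"] norm_add_sq[of "(1/2) *\<^sub>R (p - z)" "(1/2) *\<^sub>R (q - z)"]
    by (simp add: power_mult_distrib power2_eq_square)
  have "c / 2 * (norm (u - z))\<^sup>2 + c / 8 * (norm (p - q))\<^sup>2
      = (c / 2 * (norm (p - z))\<^sup>2 + c / 2 * (norm (q - z))\<^sup>2) / 2"
    unfolding iden by (simp add: algebra_simps)
  moreover have "real_of_ereal (g u) \<le> (real_of_ereal (g p) + real_of_ereal (g q)) / 2"
    using Gamma0_on_convex[OF assms(1-6), of "1/2"] by (simp add: u_def)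
  ultimately show "real_of_ereal (g u) + c / 2 * (norm (u - z))\<^sup>2 + c / 8 * (norm (p - q))\<^sup>2
      \<le> (real_of_ereal (g p) + c / 2 * (norm (p - z))\<^sup>2 + (real_of_ereal (g q) + c / 2 * (norm (q - z))\<^sup>2)) / 2"
    by argo
qed

lemma minimizing_sequence_converges:
  fixes Q :: "'a::{real_normed_vector,complete_space} \<Rightarrow> real"
  assumes "D \<noteq> {}" "bdd_below (Q ` D)" "0 < \<kappa>"
    and mid: "\<And>p q. p \<in> D \<Longrightarrow> q \<in> D \<Longrightarrow> \<exists>u\<in>D. Q u + \<kappa> * (norm (p - q))\<^sup>2 \<le> (Q p + Q q) / 2"
  obtains P p where "\<And>n. P n \<in> D" "P \<longlonglongrightarrow> p" "(\<lambda>n. Q (P n)) \<longlonglongrightarrow> Inf (Q ` D)"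
proof -
  define m where "m = Inf (Q ` D)"
  have mle: "m \<le> Q p" if "p \<in> D" for p
    using assms(2) that by (simp add: m_def cInf_lower)
  have "\<exists>p\<in>D. Q p < m + inverse (real (Suc n))" for n
    using cInf_lessD[of "Q ` D" "m + inverse (real (Suc n))"] \<open>D \<noteq> {}\<close> by (simp add: m_def)
  then obtain P where P: "\<And>n. P n \<in> D" "\<And>n. Q (P n) < m + inverse (real (Suc n))" by metis
  have "Cauchy P"
  proof (rule Cauchy_if_minimizing_uniformly_convex[OF \<open>0 < \<kappa>\<close> _ P])
    fix p q assume "p \<in> D" "q \<in> D"
    then obtain u where "u \<in> D" "Q u + \<kappa> * (norm (p - q))\<^sup>2 \<le> (Q p + Q q) / 2"
      using mid by blast
    then show "\<kappa> * (norm (p - q))\<^sup>2 \<le> (Q p + Q q) / 2 - m" using mle[of u] by argo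
  qed
  then obtain p where "P \<longlonglongrightarrow> p" using Cauchy_convergent convergent_def by blast
  moreover have "(\<lambda>n. Q (P n)) \<longlonglongrightarrow> m"
  proof (rule real_tendsto_sandwich[where f="\<lambda>_. m" and h="\<lambda>n. m + inverse (real (Suc n))"])
    show "\<forall>\<^sub>F n in sequentially. Q (P n) \<le> m + inverse (real (Suc n))"
      by (intro always_eventually allI less_imp_le P(2))
    show "(\<lambda>n. m + inverse (real (Suc n))) \<longlonglongrightarrow> m" by (rule LIMSEQ_inverse_real_of_nat_add)
  qed (use mle P in auto)
  ultimately show ?thesis unfolding m_def by (rule that[OF P(1)])
qed

lemma Gamma0_on_prox_min_exists:
  fixes g :: "'a::{real_inner,complete_space} \<Rightarrow> ereal"
  assumes G: "Gamma0_on Y g" and "subspace Y" and minor: "\<forall>p\<in>Y. ereal (inner a p + b) \<le> g p"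
    and "0 < c"
  shows "\<exists>p\<in>Y. g p \<noteq> \<infinity> \<and>
    (\<forall>y\<in>Y. g p + ereal (c / 2 * (norm (p - z))\<^sup>2) \<le> g y + ereal (c / 2 * (norm (y - z))\<^sup>2))"
proof -
  define D where "D = {p \<in> Y. g p \<noteq> \<infinity>}"
  define gr where "gr x = real_of_ereal (g x)" for x
  define Q where "Q x = gr x + c / 2 * (norm (x - z))\<^sup>2" for x
  have gD: "g p = ereal (gr p)" if "p \<in> D" for p
    using Gamma0_on_finite[OF G] that by (simp add: D_def gr_def)
  have "b + inner a z - (norm a)\<^sup>2 / (2 * c) \<le> Q p" if "p \<in> D" for p
  proof -
    have "ereal (inner a p + b) \<le> g p" using minor that by (simp add: D_def)
    then have "inner a p + b \<le> gr p" using gD[OF that] by simp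
    then show ?thesis using affine_quadratic_lower_bound[OF \<open>0 < c\<close>, of a z p] by (simp add: Q_def)
  qed
  then have bdd: "bdd_below (Q ` D)" by (rule bdd_belowI2)
  have "D \<noteq> {}" using G by (auto simp: Gamma0_on_def D_def)
  have mid: "\<exists>u\<in>D. Q u + c / 8 * (norm (p - q))\<^sup>2 \<le> (Q p + Q q) / 2" if "p \<in> D" "q \<in> D" for p q
    using that Gamma0_on_quadratic_midpoint(1,2)[OF G \<open>subspace Y\<close>, of p q]
      Gamma0_on_quadratic_midpoint(3)[OF G \<open>subspace Y\<close>, of p q c z]
    by (force simp: D_def Q_def gr_def)
  have "0 < c / 8" using \<open>0 < c\<close> by simp
  then obtain P p where P: "\<And>n. P n \<in> D" "P \<longlonglongrightarrow> p" "(\<lambda>n. Q (P n)) \<longlonglongrightarrow> Inf (Q ` D)"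
    using minimizing_sequence_converges[OF \<open>D \<noteq> {}\<close> bdd _ mid] by blast
  have lim: "(\<lambda>n. Q (P n) - c / 2 * (norm (P n - z))\<^sup>2) \<longlonglongrightarrow> Inf (Q ` D) - c / 2 * (norm (p - z))\<^sup>2"
    by (intro tendsto_intros P(2,3))
  have gP: "g (P n) \<le> ereal (Q (P n) - c / 2 * (norm (P n - z))\<^sup>2)" for n
    using gD[OF P(1)] by (simp add: Q_def)
  have PY: "P n \<in> Y" for n using P(1) by (simp add: D_def)
  have "p \<in> Y" "g p \<le> ereal (Inf (Q ` D) - c / 2 * (norm (p - z))\<^sup>2)"
    using Gamma0_on_lsc[OF G PY gP P(2) lim] by simp_all
  then have "p \<in> D" by (auto simp: D_def)
  then have "Q p \<le> Inf (Q ` D)" using gD \<open>g p \<le> _\<close> by (simp add: Q_def)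
  have "g p + ereal (c / 2 * (norm (p - z))\<^sup>2) \<le> g y + ereal (c / 2 * (norm (y - z))\<^sup>2)"
    if "y \<in> Y" for y
  proof (cases "g y = \<infinity>")
    case False
    then have "y \<in> D" using that by (simp add: D_def)
    then have "Q p \<le> Q y"
      using \<open>Q p \<le> Inf (Q ` D)\<close> cInf_lower[OF imageI[of y D Q] bdd] by linarith
    then show ?thesis using gD \<open>p \<in> D\<close> \<open>y \<in> D\<close> by (simp add: Q_def)
  qed simp
  then show ?thesis using \<open>p \<in> D\<close> by (auto simp: D_def)
qed

lemma prox_min_segment_le:
  fixes g :: "'a::real_inner \<Rightarrow> ereal"
  assumes G: "Gamma0_on Y g" and "subspace Y" "p \<in> Y" "y \<in> Y" "g p = ereal gp" "g y = ereal gy"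
    and min: "\<forall>y\<in>Y. g p + ereal (c / 2 * (norm (p - z))\<^sup>2) \<le> g y + ereal (c / 2 * (norm (y - z))\<^sup>2)"
    and "0 < t" "t < 1"
  shows "gp - gy - c * inner (p - z) (y - p) \<le> t * (c / 2 * (norm (y - p))\<^sup>2)"
proof -
  define I where "I = inner (p - z) (y - p)"
  define u where "u = (1 - t) *\<^sub>R p + t *\<^sub>R y"
  have "u \<in> Y" "g u \<noteq> \<infinity>" "real_of_ereal (g u) \<le> (1 - t) * gp + t * gy"
    using Gamma0_on_convex[OF G \<open>subspace Y\<close> \<open>p \<in> Y\<close> \<open>y \<in> Y\<close>, of t] assms by (simp_all add: u_def)
  moreover have "(norm (u - z))\<^sup>2 = (norm (p - z))\<^sup>2 + 2 * t * I + t\<^sup>2 * (norm (y - p))\<^sup>2"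
  proof -
    have "u - z = (p - z) + t *\<^sub>R (y - p)" by (simp add: u_def algebra_simps)
    also have "(norm \<dots>)\<^sup>2 = (norm (p - z))\<^sup>2 + 2 * t * I + t\<^sup>2 * (norm (y - p))\<^sup>2"
      using norm_add_sq[of "p - z" "t *\<^sub>R (y - p)"] by (simp add: I_def power_mult_distrib)
    finally show ?thesis .
  qed
  ultimately have "gp + c / 2 * (norm (p - z))\<^sup>2 \<le> (1 - t) * gp + t * gy
      + c / 2 * ((norm (p - z))\<^sup>2 + 2 * t * I + t\<^sup>2 * (norm (y - p))\<^sup>2)"
    using min \<open>u \<in> Y\<close> Gamma0_on_finite[OF G \<open>u \<in> Y\<close> \<open>g u \<noteq> \<infinity>\<close>] \<open>g p = ereal gp\<close>
    by (smt (verit) ereal_less_eq(3) plus_ereal.simps(1))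
  then have "t * (gp - gy - c * I) \<le> t * (t * (c / 2 * (norm (y - p))\<^sup>2))"
    by (simp add: algebra_simps power2_eq_square)
  then show ?thesis using \<open>0 < t\<close> by (simp add: I_def)
qed

lemma subdiff_on_if_prox_min:
  fixes g :: "'a::real_inner \<Rightarrow> ereal"
  assumes G: "Gamma0_on Y g" and "subspace Y" "z \<in> Y" "p \<in> Y" "g p \<noteq> \<infinity>"
    and min: "\<forall>y\<in>Y. g p + ereal (c / 2 * (norm (p - z))\<^sup>2) \<le> g y + ereal (c / 2 * (norm (y - z))\<^sup>2)"
  shows "c *\<^sub>R (z - p) \<in> subdiff_on Y g p"
proof -
  obtain gp where gp: "g p = ereal gp" using Gamma0_on_finite[OF G \<open>p \<in> Y\<close> \<open>g p \<noteq> \<infinity>\<close>] by blast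
  have "g p + ereal (inner (y - p) (c *\<^sub>R (z - p))) \<le> g y" if "y \<in> Y" for y
  proof (cases "g y = \<infinity>")
    case False
    obtain gy where gy: "g y = ereal gy" using Gamma0_on_finite[OF G \<open>y \<in> Y\<close> False] by blast
    have "gp - gy - c * inner (p - z) (y - p) \<le> 0"
      using prox_min_segment_le[OF G \<open>subspace Y\<close> \<open>p \<in> Y\<close> \<open>y \<in> Y\<close> gp gy min]
      by (intro tendsto_lowerbound[of "\<lambda>t. t * (c / 2 * (norm (y - p))\<^sup>2)" 0 "at_right 0"]
          eventually_at_rightI[of 0 1]) (auto intro!: tendsto_eq_intros)
    moreover have "inner (y - p) (c *\<^sub>R (z - p)) = - c * inner (p - z) (y - p)"
      by (simp add: inner_commute algebra_simps)
    ultimately show ?thesis using gp gy by simp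
  qed simp
  moreover have "c *\<^sub>R (z - p) \<in> Y"
    using assms by (simp add: subspace_diff subspace_scale)
  ultimately show ?thesis using gp \<open>p \<in> Y\<close> by (simp add: subdiff_on_def)
qed

lemma prox_exists:
  fixes g :: "'a::{real_inner,complete_space} \<Rightarrow> ereal"
  assumes "Gamma0_on Y g" "subspace Y" "\<forall>p\<in>Y. ereal (inner a p + b) \<le> g p" "0 < c" "z \<in> Y"
  shows "\<exists>p\<in>Y. c *\<^sub>R (z - p) \<in> subdiff_on Y g p"
  using Gamma0_on_prox_min_exists[OF assms(1-4), of z] subdiff_on_if_prox_min[OF assms(1,2,5)] by blast

lemma prox_nonexpansive:
  assumes "0 < c" "c *\<^sub>R (z1 - p1) \<in> subdiff_on Z h p1" "c *\<^sub>R (z2 - p2) \<in> subdiff_on Z h p2"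
  shows "norm (p1 - p2) \<le> norm (z1 - z2)"
proof -
  have "0 \<le> c * inner (p1 - p2) ((z1 - z2) - (p1 - p2))"
    using subdiff_on_monotone[OF assms(2,3)] by (simp add: algebra_simps)
  then have "(norm (p1 - p2))\<^sup>2 \<le> inner (p1 - p2) (z1 - z2)"
    using \<open>0 < c\<close> by (simp add: zero_le_mult_iff inner_diff_right power2_norm_eq_inner)
  also have "\<dots> \<le> norm (p1 - p2) * norm (z1 - z2)" by (rule norm_cauchy_schwarz)
  finally show ?thesis
    by (cases "p1 = p2") (auto simp: power2_eq_square mult_le_cancel_left)
qed

lemma norm_add_scaled_antimonotone_le:
  fixes w v :: "'a::real_inner"
  assumes "inner v w \<le> - \<mu> * (norm w)\<^sup>2" "norm v \<le> C * norm w" "0 < \<mu>" "\<mu> \<le> C"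
  shows "norm (w + (\<mu> / C\<^sup>2) *\<^sub>R v) \<le> sqrt (1 - \<mu>\<^sup>2 / C\<^sup>2) * norm w"
proof -
  define s where "s = \<mu> / C\<^sup>2"
  have "0 < C" "0 < s" using assms by (simp_all add: s_def)
  have "(norm (w + s *\<^sub>R v))\<^sup>2 = (norm w)\<^sup>2 + 2 * (s * inner w v) + s\<^sup>2 * (norm v)\<^sup>2"
    using norm_add_sq[of w "s *\<^sub>R v"] by (simp add: power_mult_distrib)
  also have "\<dots> \<le> (norm w)\<^sup>2 - 2 * (s * \<mu> * (norm w)\<^sup>2) + s\<^sup>2 * (C * norm w)\<^sup>2"
  proof -
    have "s * inner w v \<le> s * (- \<mu> * (norm w)\<^sup>2)"
      using assms(1) \<open>0 < s\<close> by (intro mult_left_mono) (auto simp: inner_commute)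
    moreover have "s\<^sup>2 * (norm v)\<^sup>2 \<le> s\<^sup>2 * (C * norm w)\<^sup>2"
      using assms(2) by (intro mult_left_mono power_mono) auto
    ultimately show ?thesis by (simp add: algebra_simps)
  qed
  also have "\<dots> = (1 - \<mu>\<^sup>2 / C\<^sup>2) * (norm w)\<^sup>2"
    using \<open>0 < C\<close> by (simp add: s_def field_simps power2_eq_square)
  finally have "(norm (w + s *\<^sub>R v))\<^sup>2 \<le> (sqrt (1 - \<mu>\<^sup>2 / C\<^sup>2) * norm w)\<^sup>2"
    using assms \<open>0 < C\<close> by (simp add: power_mult_distrib power_divide)
  then show ?thesis
    unfolding s_def by (rule power2_le_imp_le) (use assms \<open>0 < C\<close> in \<open>simp add: power_divide\<close>)
qed

lemma forward_backward_contraction: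
  assumes "subspace Y" "0 < s"
    and pr: "\<And>z. z \<in> Y \<Longrightarrow> pr z \<in> Y \<and> inverse s *\<^sub>R (z - pr z) \<in> subdiff_on Y g (pr z)"
    and MY: "\<And>u. u \<in> Y \<Longrightarrow> M u \<in> Y"
    and lin: "\<And>a b c. a \<in> Y \<Longrightarrow> b \<in> Y \<Longrightarrow> M (a + c *\<^sub>R b) = M a + c *\<^sub>R M b"
    and contr: "\<And>w. w \<in> Y \<Longrightarrow> norm (w + s *\<^sub>R M w) \<le> k * norm w"
    and "u \<in> Y" "v \<in> Y"
  shows "dist (pr (u + s *\<^sub>R M u)) (pr (v + s *\<^sub>R M v)) \<le> k * dist u v"
proof -
  have Mdiff: "M (u - v) = M u - M v" using lin[OF \<open>u \<in> Y\<close> \<open>v \<in> Y\<close>, of "-1"] by simp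
  have uY: "u + s *\<^sub>R M u \<in> Y" and vY: "v + s *\<^sub>R M v \<in> Y"
    using assms by (simp_all add: subspace_add subspace_scale)
  have "dist (pr (u + s *\<^sub>R M u)) (pr (v + s *\<^sub>R M v)) \<le> norm ((u + s *\<^sub>R M u) - (v + s *\<^sub>R M v))"
    unfolding dist_norm using \<open>0 < s\<close>
      prox_nonexpansive[of "inverse s", OF _ conjunct2[OF pr[OF uY]] conjunct2[OF pr[OF vY]]]
    by simp
  also have "(u + s *\<^sub>R M u) - (v + s *\<^sub>R M v) = (u - v) + s *\<^sub>R M (u - v)"
    unfolding Mdiff by (simp add: algebra_simps)
  also have "norm \<dots> \<le> k * norm (u - v)"
    using contr assms by (simp add: subspace_diff)
  finally show ?thesis by (simp add: dist_norm)
qed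

lemma exists_subdiff_on_strongly_antimonotone:
  fixes M :: "'a::{real_inner,complete_space} \<Rightarrow> 'a"
  assumes G: "Gamma0_on Y g" and "subspace Y" "closed Y"
    and minor: "\<forall>p\<in>Y. ereal (inner a p + b) \<le> g p"
    and MY: "\<And>u. u \<in> Y \<Longrightarrow> M u \<in> Y"
    and lin: "\<And>a b c. a \<in> Y \<Longrightarrow> b \<in> Y \<Longrightarrow> M (a + c *\<^sub>R b) = M a + c *\<^sub>R M b"
    and "0 < \<mu>" and mono: "\<And>w. w \<in> Y \<Longrightarrow> inner (M w) w \<le> - \<mu> * (norm w)\<^sup>2"
    and bnd: "\<And>w. w \<in> Y \<Longrightarrow> norm (M w) \<le> C * norm w"
  shows "\<exists>u\<in>Y. M u \<in> subdiff_on Y g u"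
proof -
  define C' where "C' = max C \<mu>"
  define s where "s = \<mu> / C'\<^sup>2"
  define k where "k = sqrt (1 - \<mu>\<^sup>2 / C'\<^sup>2)"
  have "\<mu> \<le> C'" "0 < C'" using \<open>0 < \<mu>\<close> by (auto simp: C'_def)
  then have "0 < s" "0 < \<mu>\<^sup>2 / C'\<^sup>2" "\<mu>\<^sup>2 / C'\<^sup>2 \<le> 1"
    using \<open>0 < \<mu>\<close> by (simp_all add: s_def power_mono)
  then have "0 \<le> k" "k < 1" by (simp_all add: k_def)
  have contr: "norm (w + s *\<^sub>R M w) \<le> k * norm w" if "w \<in> Y" for w
    unfolding s_def k_def
  proof (rule norm_add_scaled_antimonotone_le[OF mono[OF that] _ \<open>0 < \<mu>\<close> \<open>\<mu> \<le> C'\<close>])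
    show "norm (M w) \<le> C' * norm w"
      using bnd[OF that] mult_right_mono[of C C' "norm w"] by (simp add: C'_def)
  qed
  have "\<forall>z\<in>Y. \<exists>p\<in>Y. inverse s *\<^sub>R (z - p) \<in> subdiff_on Y g p"
    using prox_exists[OF G \<open>subspace Y\<close> minor] \<open>0 < s\<close> by simp
  then obtain pr where pr: "\<And>z. z \<in> Y \<Longrightarrow> pr z \<in> Y \<and> inverse s *\<^sub>R (z - pr z) \<in> subdiff_on Y g (pr z)"
    by metis
  \<comment> \<open>\<open>\<Phi> u = u\<close> says exactly that \<open>M u\<close> is a subgradient of \<open>g\<close> at \<open>u\<close>\<close>
  define \<Phi> where "\<Phi> u = pr (u + s *\<^sub>R M u)" for u
  have contraction: "dist (\<Phi> u) (\<Phi> v) \<le> k * dist u v" if "u \<in> Y" "v \<in> Y" for u v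
    unfolding \<Phi>_def using forward_backward_contraction[OF \<open>subspace Y\<close> \<open>0 < s\<close> pr MY lin contr that] .
  have LY: "u + s *\<^sub>R M u \<in> Y" if "u \<in> Y" for u
    using that MY \<open>subspace Y\<close> by (simp add: subspace_add subspace_scale)
  have "\<Phi> ` Y \<subseteq> Y" using pr LY unfolding \<Phi>_def by blast
  moreover have "complete Y" "Y \<noteq> {}"
    using \<open>closed Y\<close> \<open>subspace Y\<close> complete_eq_closed subspace_0 by blast+
  ultimately obtain u where "u \<in> Y" "\<Phi> u = u"
    using Banach_fix[OF _ _ \<open>0 \<le> k\<close> \<open>k < 1\<close> _ contraction] by metis
  then have "inverse s *\<^sub>R ((u + s *\<^sub>R M u) - u) \<in> subdiff_on Y g u"
    using pr[OF LY[OF \<open>u \<in> Y\<close>]] by (simp add: \<Phi>_def)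
  then show ?thesis using \<open>u \<in> Y\<close> \<open>0 < s\<close> by auto
qed

text \<open>The last assumption says exactly that \<open>I + S\<close> preserves norms.\<close>

locale shifted_isometry =
  fixes Y :: "'a::{real_inner,complete_space} set" and S :: "'a \<Rightarrow> 'a"
  assumes subspace_Y: "subspace Y" and closed_Y: "closed Y" and linear_S: "linear S"
    and S_into_Y: "\<And>x. S x \<in> Y" and bij_S: "bij_betw S Y Y"
    and inner_S: "\<And>x. inner x (S x) + (1/2) * (norm (S x))\<^sup>2 = 0"
begin

lemma inner_diff_S: "inner (a - b) (S a - S b) = - (1/2) * (norm (S a - S b))\<^sup>2"
  using inner_S[of "a - b"] linear_diff[OF linear_S] by simp

lemma S_eq_if_inner_nonneg:
  assumes "0 \<le> inner (a - b) (S a - S b)"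
  shows "S a = S b"
  using assms inner_diff_S[of a b] by simp

lemma inv_S_in_Y: "u \<in> Y \<Longrightarrow> inv_into Y S u \<in> Y"
  using bij_S by (metis bij_betw_def inv_into_into)

lemma S_inv_S: "u \<in> Y \<Longrightarrow> S (inv_into Y S u) = u"
  using bij_S by (simp add: bij_betw_inv_into_right)

lemma inner_inv_S_self: "u \<in> Y \<Longrightarrow> inner (inv_into Y S u) u = - (1/2) * (norm u)\<^sup>2"
  using inner_S[of "inv_into Y S u"] S_inv_S by simp

lemma inner_inv_S_adjoint:
  assumes "z \<in> Y" "y \<in> Y"
  shows "inner (inv_into Y S z) y = inner z (- y - inv_into Y S y)"
proof -
  define a b where "a = inv_into Y S z" and "b = inv_into Y S y"
  have "S (a + b) = z + y" using assms S_inv_S linear_add[OF linear_S] by (simp add: a_def b_def)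
  then have "inner (a + b) (z + y) + (1/2) * (norm (z + y))\<^sup>2 = 0" using inner_S[of "a + b"] by simp
  moreover have "inner a z + (1/2) * (norm z)\<^sup>2 = 0" "inner b y + (1/2) * (norm y)\<^sup>2 = 0"
    using inner_S[of a] inner_S[of b] assms S_inv_S by (simp_all add: a_def b_def)
  ultimately have "inner a y + inner b z + inner z y = 0"
    by (simp add: power2_norm_eq_inner inner_add_left inner_add_right inner_commute algebra_simps)
  then show ?thesis by (simp add: a_def b_def inner_diff_right inner_commute algebra_simps)
qed

lemma fixed_point_exists:
  assumes "Gamma0_on UNIV f" "Gamma0_on Y (conj_on UNIV f)"
  shows "\<exists>e\<in>Y. e \<in> subdiff_on Y (conj_on UNIV f) (S e)"
proof -
  obtain x0 r0 where "f x0 = ereal r0"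
    using assms(1) unfolding Gamma0_on_def by (metis ereal_cases)
  then have minor: "\<forall>p\<in>Y. ereal (inner x0 p + - r0) \<le> conj_on UNIV f p"
    using conj_on_ge[of x0 UNIV _ f] by simp
  obtain C where "\<forall>u\<in>Y. norm (inv_into Y S u) \<le> C * norm u"
    using bounded_if_adjoint_on[OF subspace_Y closed_Y inv_S_in_Y inner_inv_S_adjoint] by blast
  then obtain u where "u \<in> Y" "inv_into Y S u \<in> subdiff_on Y (conj_on UNIV f) u"
    using exists_subdiff_on_strongly_antimonotone[OF assms(2) subspace_Y closed_Y minor inv_S_in_Y
        adjoint_on_imp_linear[OF subspace_Y inv_S_in_Y inner_inv_S_adjoint], of "1/2" C]
      inner_inv_S_self by force
  then show ?thesis using S_inv_S inv_S_in_Y by metis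
qed

lemma fixed_point_unique:
  assumes "e \<in> Y" "e \<in> subdiff_on Y g (S e)" "e' \<in> Y" "e' \<in> subdiff_on Y g (S e')"
  shows "e' = e"
proof -
  have "0 \<le> inner (e' - e) (S e' - S e)"
    using subdiff_on_monotone[OF assms(4,2)] by (simp add: inner_commute)
  then have "S e' = S e" by (rule S_eq_if_inner_nonneg)
  then show ?thesis using bij_S assms(1,3) by (metis bij_betw_imp_inj_on inj_onD)
qed

lemma S_eq_if_subdiff:
  assumes "e \<in> subdiff_on Y (conj_on UNIV f) (S e)" "S x \<in> subdiff_on UNIV f x"
  shows "S x = S e"
  using inner_subdiff_conj_on_nonneg[OF assms(2) S_into_Y assms(1)] by (rule S_eq_if_inner_nonneg)

lemma subdiff_iff_fenchel_eq_iff_eq: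
  assumes e: "e \<in> subdiff_on Y (conj_on UNIV f) (S e)"
    and "f x \<noteq> \<infinity>" "f x \<noteq> -\<infinity>" "f x \<le> conj_on Y (conj_on UNIV f) e"
  shows "(S x \<in> subdiff_on UNIV f x
            \<longleftrightarrow> conj_on UNIV f (S x) + ereal ((1/2) * (norm (S x))\<^sup>2) + f x = 0)
       \<and> (conj_on UNIV f (S x) + ereal ((1/2) * (norm (S x))\<^sup>2) + f x = 0 \<longleftrightarrow> S x = S e)"
proof -
  obtain r where r: "f x = ereal r" using assms(2,3) by (cases "f x") auto
  have sum_eq_0: "a + ereal h + ereal r = 0 \<longleftrightarrow> a = ereal (- h - r)" for a :: ereal and h
    by (cases a) auto
  have inner_x: "inner x (S x) = - (1/2) * (norm (S x))\<^sup>2" using inner_S[of x] by simp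
  have fenchel: "S x \<in> subdiff_on UNIV f x
      \<longleftrightarrow> conj_on UNIV f (S x) + ereal ((1/2) * (norm (S x))\<^sup>2) + f x = 0"
    using subdiff_on_iff_conj_on[of x UNIV "S x" f r] r inner_x by (simp add: sum_eq_0)
  moreover have "S x \<in> subdiff_on UNIV f x" if "S x = S e"
  proof -
    obtain \<gamma> where "e \<in> Y" and \<gamma>: "conj_on UNIV f (S e) = ereal \<gamma>"
      using subdiff_onD[OF e] by blast
    have "conj_on Y (conj_on UNIV f) e = ereal (inner (S e) e - \<gamma>)"
      using subdiff_on_iff_conj_on[of "S e" Y e "conj_on UNIV f" \<gamma>] S_into_Y \<open>e \<in> Y\<close> \<gamma> e by blast
    then have "\<gamma> \<le> inner x (S x) - r"
      using assms(4) r that inner_S[of e] inner_x by (simp add: inner_commute)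
    moreover have "inner x (S x) - r \<le> \<gamma>"
      using conj_on_ge[of x UNIV "S x" f] r \<gamma> that by simp
    ultimately show ?thesis
      using subdiff_on_iff_conj_on[of x UNIV "S x" f r] r \<gamma> that by simp
  qed
  ultimately show ?thesis using S_eq_if_subdiff[OF e] by blast
qed

end

theorem theorem3p1:
  fixes S :: "'a::{real_inner, complete_space} \<Rightarrow> 'a"
    and Y :: "'a set"
    and f :: "'a \<Rightarrow> ereal"
  assumes "subspace Y" and "closed Y"
    and "bounded_linear S"
    and "\<forall>x. S x \<in> Y"
    and "bij_betw S Y Y"
    and "\<forall>x. inner x (S x) + (1/2) * (norm (S x))\<^sup>2 = 0"
    and "Gamma0_on UNIV f"
    and "Gamma0_on Y (conj_on UNIV f)"
  shows "\<exists>e\<in>Y. e \<in> subdiff_on Y (conj_on UNIV f) (S e)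
      \<and> (\<forall>e'\<in>Y. e' \<in> subdiff_on Y (conj_on UNIV f) (S e') \<longrightarrow> e' = e)
      \<and> (\<forall>x. S x \<in> subdiff_on UNIV f x \<longrightarrow> S x = S e)
      \<and> (\<forall>x. f x \<noteq> \<infinity> \<and> f x \<noteq> -\<infinity> \<and> f x \<le> conj_on Y (conj_on UNIV f) e \<longrightarrow>
            (S x \<in> subdiff_on UNIV f x
               \<longleftrightarrow> conj_on UNIV f (S x) + ereal ((1/2) * (norm (S x))\<^sup>2) + f x = 0)
          \<and> (conj_on UNIV f (S x) + ereal ((1/2) * (norm (S x))\<^sup>2) + f x = 0
               \<longleftrightarrow> S x = S e))
      \<and> (\<forall>x. (\<forall>y. f x \<le> f y) \<longrightarrow>
            (S x \<in> subdiff_on UNIV f x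
               \<longleftrightarrow> conj_on UNIV f (S x) + ereal ((1/2) * (norm (S x))\<^sup>2) + f x = 0)
          \<and> (conj_on UNIV f (S x) + ereal ((1/2) * (norm (S x))\<^sup>2) + f x = 0
               \<longleftrightarrow> S x = S e))"
proof -
  interpret shifted_isometry Y S
    using assms(4,6)
    by (intro shifted_isometry.intro[OF assms(1,2) bounded_linear.linear[OF assms(3)] _ assms(5)]) auto
  obtain e where "e \<in> Y" and e: "e \<in> subdiff_on Y (conj_on UNIV f) (S e)"
    using fixed_point_exists[OF assms(7,8)] by blast
  have minimizer_finite: "f x \<noteq> \<infinity> \<and> f x \<noteq> -\<infinity>" if "\<forall>y. f x \<le> f y" for x
  proof -
    obtain x0 where "f x0 \<noteq> \<infinity>" using assms(7) by (auto simp: Gamma0_on_def)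
    then show ?thesis using that[rule_format, of x0] assms(7) by (auto simp: Gamma0_on_def)
  qed
  have "e' = e" if "e' \<in> Y" "e' \<in> subdiff_on Y (conj_on UNIV f) (S e')" for e'
    using fixed_point_unique[OF \<open>e \<in> Y\<close> e that] .
  moreover note S_eq_if_subdiff[OF e] subdiff_iff_fenchel_eq_iff_eq[OF e]
  moreover note minimizer_le_biconj[OF subspace_0[OF assms(1)]] minimizer_finite
  ultimately show ?thesis using \<open>e \<in> Y\<close> e by blast
qed

end
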